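(* A function $f:\mathbb{N}\to\mathbb{N}$ is obliviously-computable by a leaderless CRN if and only if $f$ is semilinear and superadditive (i.e. $f(x)+f(y)\le f(x+y)$ for all $x,y\in\mathbb{N}$).
   Context: A chemical reaction network (CRN) is a pair $(\mathcal{S},\mathcal{R})$ of a finite set of species and a finite set of reactions $(\vec{R},\vec{P})\in\mathbb{N}^{\mathcal{S}}\times\mathbb{N}^{\mathcal{S}}$. A configuration is $\vec{C}\in\mathbb{N}^{\mathcal{S}}$; a reaction is applicable if $\vec{R}\le\vec{C}$ and yields $\vec{C}-\vec{R}+\vec{P}$; reachability is via finite sequences of applicable reactions. A leaderless CRN computing $f:\mathbb{N}\to\mathbb{N}$ has an input species $X$ and an output species $Y$; the initial configuration for input $x$ has $x$ copies of $X$ and zero of all other species (no leader). $\vec{C}$ is stable if all configurations reachable from it have the same count of $Y$. The CRN stably computes $f$ if for every $x$ and every $\vec{C}$ reachable from the initial configuration, some stable $\vec{O}$ reachable from $\vec{C}$ has $\vec{O}(Y)=f(x)$. It is output-oblivious if $Y$ is never a reactant. $f$ is obliviously-computable by a leaderless CRN if some leaderless output-oblivious CRN stably computes it. A set $S\subseteq\mathbb{N}^d$ is semilinear if it is a finite Boolean combination of threshold sets $\{\vec{x}:\vec{a}\cdot\vec{x}\ge b\}$ and mod sets $\{\vec{x}:\vec{a}\cdot\vec{x}\equiv b\bmod c\}$ ($\vec{a}\in\mathbb{Z}^d,b\in\mathbb{Z},c\in\mathbb{N}_+$); a function is semilinear if it is a finite union of affine partial functions with disjoint semilinear domains. *)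

theory Defs
  imports Complex_Main
begin

type_synonym config = "nat \<Rightarrow> nat"
type_synonym reaction = "config \<times> config"

definition valid_crn :: "nat set \<Rightarrow> reaction set \<Rightarrow> bool" where
  "valid_crn S R \<longleftrightarrow> finite S \<and> finite R \<and>
     (\<forall>(r, p) \<in> R. \<forall>s. s \<notin> S \<longrightarrow> r s = 0 \<and> p s = 0)"

definition crn_step :: "reaction set \<Rightarrow> config \<Rightarrow> config \<Rightarrow> bool" where
  "crn_step R C D \<longleftrightarrow> (\<exists>(r, p) \<in> R. (\<forall>s. r s \<le> C s) \<and> D = (\<lambda>s. C s - r s + p s))"

definition reachable :: "reaction set \<Rightarrow> config \<Rightarrow> config \<Rightarrow> bool" where
  "reachable R = (crn_step R)\<^sup>*\<^sup>*"

definition stable_config :: "reaction set \<Rightarrow> nat \<Rightarrow> config \<Rightarrow> bool" where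
  "stable_config R Y C \<longleftrightarrow> (\<forall>D. reachable R C D \<longrightarrow> D Y = C Y)"

text \<open>Leaderless initial configuration: x copies of X, nothing else.\<close>
definition init_config :: "nat \<Rightarrow> nat \<Rightarrow> config" where
  "init_config X x = (\<lambda>s. if s = X then x else 0)"

definition stably_computes :: "reaction set \<Rightarrow> nat \<Rightarrow> nat \<Rightarrow> (nat \<Rightarrow> nat) \<Rightarrow> bool" where
  "stably_computes R X Y f \<longleftrightarrow>
     (\<forall>x C. reachable R (init_config X x) C \<longrightarrow>
        (\<exists>Out. reachable R C Out \<and> stable_config R Y Out \<and> Out Y = f x))"

definition output_oblivious :: "reaction set \<Rightarrow> nat \<Rightarrow> bool" where
  "output_oblivious R Y \<longleftrightarrow> (\<forall>(r, p) \<in> R. r Y = 0)"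

definition obliviously_computable :: "(nat \<Rightarrow> nat) \<Rightarrow> bool" where
  "obliviously_computable f \<longleftrightarrow>
     (\<exists>S R X Y. valid_crn S R \<and> X \<in> S \<and> Y \<in> S \<and> X \<noteq> Y \<and>
        output_oblivious R Y \<and> stably_computes R X Y f)"

inductive semilinear_set :: "nat set \<Rightarrow> bool" where
  threshold: "semilinear_set {x. a * int x \<ge> b}"
| modset: "c > 0 \<Longrightarrow> semilinear_set {x. (a * int x) mod int c = b mod int c}"
| compl: "semilinear_set A \<Longrightarrow> semilinear_set (- A)"
| inter: "semilinear_set A \<Longrightarrow> semilinear_set B \<Longrightarrow> semilinear_set (A \<inter> B)"
| union: "semilinear_set A \<Longrightarrow> semilinear_set B \<Longrightarrow> semilinear_set (A \<union> B)"

definition semilinear_fun :: "(nat \<Rightarrow> nat) \<Rightarrow> bool" where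
  "semilinear_fun f \<longleftrightarrow>
     (\<exists>ps :: (nat set \<times> rat \<times> rat) list.
        (\<forall>(D, a, b) \<in> set ps. semilinear_set D \<and>
            (\<forall>x \<in> D. of_nat (f x) = a * of_nat x + b)) \<and>
        (\<forall>i < length ps. \<forall>j < length ps. i \<noteq> j \<longrightarrow> fst (ps ! i) \<inter> fst (ps ! j) = {}) \<and>
        (\<Union>(D, a, b) \<in> set ps. D) = UNIV)"

definition superadditive :: "(nat \<Rightarrow> nat) \<Rightarrow> bool" where
  "superadditive f \<longleftrightarrow> (\<forall>x y. f x + f y \<le> f (x + y))"

end

(*
  Both directions rest on two facts: configurations can be added to each other without
  disturbing reachability, and since the output species is never consumed, a configuration
  lying below a stable one away from the output is stable too.

  If an output-oblivious CRN computes f, running the computations for x and y side by side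
  shows that f is superadditive. Following the inputs 0, 1, 2, ... by configurations that
  already carry the final output, Dickson's lemma gives a < a + q whose difference e can be
  pumped arbitrarily often below later such configurations. Hence f (a + k q) = f a + k e(Y)
  and f (y + q) \<ge> f y + e(Y) for y \<ge> a, and superadditivity leaves only finitely many strict
  inequalities in each residue class: f (x + q) = f x + e(Y) for all large x, so f is
  semilinear.

  Conversely, the pieces of a semilinear f are eventually periodic with a common period P,
  so f (x + 2P) + f x = 2 f (x + P) eventually, and superadditivity makes the increment
  f (x + P) - f x eventually constant. A CRN then turns every input molecule into a block
  of size 1 and merges blocks of sizes c1 and c2, emitting f (c1 + c2) - f c1 - f c2 output
  molecules; large block sizes are kept only modulo P. When no reaction applies, a single
  block of size c is left and the output is f c plus the increments of the discarded periods,
  which is f x.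
*)

theory Submission
  imports Defs "HOL-Library.Function_Algebras"
begin

section \<open>Reachability in chemical reaction networks\<close>

lemma crn_stepE:
  assumes "crn_step R C D"
  obtains r p where "(r, p) \<in> R" "r \<le> C" "D = C - r + p"
  using assms unfolding crn_step_def le_fun_def by (auto simp: fun_eq_iff)

lemma crn_stepI: "(r, p) \<in> R \<Longrightarrow> r \<le> C \<Longrightarrow> crn_step R C (C - r + p)"
  unfolding crn_step_def le_fun_def by (intro bexI[of _ "(r, p)"]) (auto simp: plus_fun_def)

lemma crn_step_add: "crn_step R C D \<Longrightarrow> crn_step R (C + E) (D + E)"
proof (elim crn_stepE)
  fix r p assume rp: "(r, p) \<in> R" "r \<le> C" and D: "D = C - r + p"
  have "r \<le> C + E" using rp(2) by (simp add: le_fun_def trans_le_add1)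
  moreover have "(D + E) s = (C + E - r + p) s" for s
    using le_funD[OF rp(2), of s] by (simp add: D)
  ultimately show ?thesis using crn_stepI[OF rp(1)] by (metis ext)
qed

lemma reachable_refl [simp]: "reachable R C C"
  unfolding reachable_def by simp

lemma reachable_step: "crn_step R C D \<Longrightarrow> reachable R C D"
  unfolding reachable_def by simp

lemma reachable_trans: "reachable R C D \<Longrightarrow> reachable R D E \<Longrightarrow> reachable R C E"
  unfolding reachable_def by simp

lemma reachable_induct [consumes 1, case_names refl step]:
  assumes "reachable R C D" "P C"
    and "\<And>D E. reachable R C D \<Longrightarrow> crn_step R D E \<Longrightarrow> P D \<Longrightarrow> P E"
  shows "P D"
  using assms unfolding reachable_def by (induction rule: rtranclp_induct) auto

lemma reachable_add: "reachable R C D \<Longrightarrow> reachable R (C + E) (D + E)"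
proof (induction rule: reachable_induct)
  case (step D D')
  then show ?case by (meson crn_step_add reachable_step reachable_trans)
qed simp

lemma reachable_pump:
  assumes "reachable R (C + E) (C + F)"
  shows "reachable R (C + (\<lambda>s. k * E s)) (C + (\<lambda>s. k * F s))"
proof (induction k)
  case (Suc k)
  have "reachable R ((C + E) + (\<lambda>s. k * E s)) ((C + F) + (\<lambda>s. k * E s))"
    using reachable_add[OF assms] .
  moreover have "reachable R ((C + (\<lambda>s. k * E s)) + F) ((C + (\<lambda>s. k * F s)) + F)"
    using reachable_add[OF Suc] .
  moreover have "C + (\<lambda>s. Suc k * E s) = (C + E) + (\<lambda>s. k * E s)"
    and "(C + F) + (\<lambda>s. k * E s) = (C + (\<lambda>s. k * E s)) + F"
    and "(C + (\<lambda>s. k * F s)) + F = C + (\<lambda>s. Suc k * F s)"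
    by (simp_all add: fun_eq_iff)
  ultimately show ?case
    by (metis reachable_trans)
qed (simp add: zero_fun_def[symmetric])

lemma reachable_support:
  assumes "valid_crn S R" "reachable R C D" "\<forall>s. s \<notin> S \<longrightarrow> C s = 0"
  shows "\<forall>s. s \<notin> S \<longrightarrow> D s = 0"
  using assms(2,3)
proof (induction rule: reachable_induct)
  case (step D E)
  from step.hyps(2) obtain r p where "(r, p) \<in> R" "E = D - r + p" by (rule crn_stepE)
  with assms(1) step.IH step.prems show ?case unfolding valid_crn_def by fastforce
qed

lemma terminal_stable:
  assumes "\<And>D. \<not> crn_step R C D"
  shows "stable_config R Y C"
proof -
  have "D = C" if "reachable R C D" for D
    using that assms unfolding reachable_def by (cases rule: converse_rtranclpE) auto
  then show ?thesis unfolding stable_config_def by blast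
qed

lemma output_oblivious_step_mono:
  "output_oblivious R Y \<Longrightarrow> crn_step R C D \<Longrightarrow> C Y \<le> D Y"
  unfolding output_oblivious_def crn_step_def by auto

lemma output_oblivious_reachable_mono:
  assumes "output_oblivious R Y" "reachable R C D"
  shows "C Y \<le> D Y"
  using assms(2)
proof (induction rule: reachable_induct)
  case (step D E)
  then show ?case using output_oblivious_step_mono[OF assms(1)] le_trans by blast
qed simp

text \<open>Since the output species is never consumed, its count can be changed without affecting
  which reactions are applicable.\<close>
lemma reachable_change_output:
  assumes oblivious: "output_oblivious R Y" and "reachable R C D"
  shows "reachable R (C(Y := n)) (D(Y := D Y - C Y + n))"
  using assms(2)
proof (induction rule: reachable_induct)
  case refl
  show ?case by simp
next
  case (step D E)
  obtain r p where rp: "(r, p) \<in> R" "r \<le> D" and E: "E = D - r + p"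
    using step.hyps(2) by (rule crn_stepE)
  have "r Y = 0" using oblivious rp(1) unfolding output_oblivious_def by auto
  then have "r \<le> D(Y := D Y - C Y + n)" using rp(2) by (simp add: le_fun_def)
  note step' = crn_stepI[OF rp(1) this]
  have "C Y \<le> D Y"
    using output_oblivious_reachable_mono[OF oblivious step.hyps(1)] .
  then have "E(Y := E Y - C Y + n) = D(Y := D Y - C Y + n) - r + p"
    using \<open>r Y = 0\<close> by (auto simp: E fun_eq_iff)
  with step' have "crn_step R (D(Y := D Y - C Y + n)) (E(Y := E Y - C Y + n))" by simp
  with step.IH show ?case by (blast intro: reachable_step reachable_trans)
qed

lemma stable_config_antimono:
  assumes oblivious: "output_oblivious R Y" and stable: "stable_config R Y C'"
    and le: "\<forall>s. s \<noteq> Y \<longrightarrow> C s \<le> C' s"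
  shows "stable_config R Y C"
  unfolding stable_config_def
proof (intro allI impI)
  fix D assume "reachable R C D"
  define W where "W = (C' - C)(Y := 0)"
  have "C' = (C + W)(Y := C' Y)" using le by (auto simp: W_def fun_eq_iff)
  moreover have "reachable R ((C + W)(Y := C' Y)) ((D + W)(Y := (D + W) Y - (C + W) Y + C' Y))"
    using reachable_change_output[OF oblivious reachable_add[OF \<open>reachable R C D\<close>]] .
  ultimately have "reachable R C' ((D + W)(Y := (D + W) Y - (C + W) Y + C' Y))"
    by simp
  then have "((D + W)(Y := (D + W) Y - (C + W) Y + C' Y)) Y = C' Y"
    using stable unfolding stable_config_def by blast
  then have "D Y - C Y + C' Y = C' Y" by (simp add: W_def)
  moreover have "C Y \<le> D Y" using output_oblivious_reachable_mono[OF oblivious \<open>reachable R C D\<close>] .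
  ultimately show "D Y = C Y" by simp
qed

lemma init_config_add: "init_config X (x + y) = init_config X x + init_config X y"
  by (auto simp: init_config_def fun_eq_iff)

lemma init_config_0: "init_config X 0 = 0"
  by (auto simp: init_config_def fun_eq_iff)

lemma init_config_mult: "init_config X (k * x) = (\<lambda>s. k * init_config X x s)"
  by (auto simp: init_config_def fun_eq_iff)

section \<open>Monotone subsequences and pumping\<close>

lemma nat_seq_mono_subseq:
  fixes u :: "nat \<Rightarrow> nat"
  obtains \<psi> :: "nat \<Rightarrow> nat" where "strict_mono \<psi>" "mono (u \<circ> \<psi>)"
proof -
  obtain \<psi> where \<psi>: "strict_mono \<psi>" "monoseq (u \<circ> \<psi>)"
    using seq_monosub[of u] by (auto simp: o_def)
  show thesis
  proof (cases "mono (u \<circ> \<psi>)")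
    case True
    with \<psi>(1) show thesis by (rule that)
  next
    case False
    with \<psi>(2) have "antimono (u \<circ> \<psi>)" by (simp add: monoseq_iff)
    then have dec: "u (\<psi> n) \<le> u (\<psi> m)" if "m \<le> n" for m n
      using antimonoD[OF _ that] by fastforce
    obtain N where N: "\<forall>n. u (\<psi> N) \<le> u (\<psi> n)"
      using ex_has_least_nat[of "\<lambda>_. True" 0 "u \<circ> \<psi>"] by auto
    have "u (\<psi> (N + n)) = u (\<psi> N)" for n
      using dec[of N "N + n"] N by (simp add: le_antisym)
    then have "mono (u \<circ> (\<lambda>n. \<psi> (N + n)))"
      by (simp add: mono_def)
    moreover have "strict_mono (\<lambda>n. \<psi> (N + n))"
      using \<psi>(1) by (simp add: strict_mono_def)
    ultimately show thesis using that by blast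
  qed
qed

text \<open>Dickson's lemma in the form of a subsequence along which every coordinate is monotone.\<close>
lemma finite_coordinates_mono_subseq:
  fixes v :: "nat \<Rightarrow> 'a \<Rightarrow> nat"
  assumes "finite S"
  shows "\<exists>\<phi> :: nat \<Rightarrow> nat. strict_mono \<phi> \<and> (\<forall>s\<in>S. mono (\<lambda>n. v (\<phi> n) s))"
  using assms
proof (induction S rule: finite_induct)
  case empty
  have "strict_mono (id :: nat \<Rightarrow> nat)" by (simp add: strict_mono_def)
  then show ?case by blast
next
  case (insert s S)
  then obtain \<phi> :: "nat \<Rightarrow> nat" where \<phi>: "strict_mono \<phi>" "\<forall>t\<in>S. mono (\<lambda>n. v (\<phi> n) t)"
    by blast
  obtain \<psi> :: "nat \<Rightarrow> nat" where \<psi>: "strict_mono \<psi>" "mono ((\<lambda>n. v (\<phi> n) s) \<circ> \<psi>)"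
    by (rule nat_seq_mono_subseq[of "\<lambda>n. v (\<phi> n) s"])
  have "mono (\<lambda>n. v (\<phi> (\<psi> n)) t)" if "t \<in> insert s S" for t
  proof (cases "t = s")
    case True
    with \<psi>(2) show ?thesis by (simp add: o_def)
  next
    case False
    with that \<phi>(2) have "mono (\<lambda>n. v (\<phi> n) t)" by blast
    then show ?thesis
      using monoD[OF strict_mono_mono[OF \<psi>(1)]] by (auto intro!: monoI dest: monoD)
  qed
  moreover have "strict_mono (\<lambda>n. \<phi> (\<psi> n))"
    using \<phi>(1) \<psi>(1) by (simp add: strict_mono_def)
  ultimately show ?case by blast
qed

lemma mono_nat_eventually_const_or_unbounded:
  fixes u :: "nat \<Rightarrow> nat"
  assumes "mono u"
  shows "(\<forall>\<^sub>F N in sequentially. \<forall>n\<ge>N. u n = u N) \<or> (\<forall>M. \<exists>n. M \<le> u n)"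
proof (cases "\<forall>M. \<exists>n. M \<le> u n")
  case False
  then obtain M where "\<forall>n. u n < M" by (auto simp: not_le)
  then have fin: "finite (range u)" by (auto intro: finite_subset[of _ "{..<M}"])
  then have "Max (range u) \<in> range u" by (rule Max_in) simp
  then obtain N where "u N = Max (range u)" by auto
  then have N: "\<forall>n. u n \<le> u N" using fin by simp
  have "\<forall>n\<ge>N'. u n = u N'" if "N \<le> N'" for N'
  proof (intro allI impI)
    fix n assume "N' \<le> n"
    then show "u n = u N'"
      using N monoD[OF assms \<open>N \<le> N'\<close>] monoD[OF assms \<open>N' \<le> n\<close>] by (meson le_antisym le_trans)
  qed
  then show ?thesis by (auto simp: eventually_sequentially)
qed simp

text \<open>In a coordinatewise monotone sequence of vectors, some step \<open>v N \<le> v (Suc N)\<close> only increases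
  coordinates that are unbounded, so it can be repeated arbitrarily often below the sequence.\<close>
lemma mono_vector_seq_pumpable:
  fixes v :: "nat \<Rightarrow> 'a \<Rightarrow> nat"
  assumes "finite S" and support: "\<And>n s. s \<notin> S \<Longrightarrow> v n s = 0"
    and mono: "\<And>s. s \<in> S \<Longrightarrow> mono (\<lambda>n. v n s)"
  obtains N where "\<And>k. \<exists>m. \<forall>s. v N s + k * (v (Suc N) s - v N s) \<le> v m s"
proof -
  define bounded where "bounded s N \<longleftrightarrow> (\<forall>n\<ge>N. v n s = v N s)" for s N
  define unbounded where "unbounded s \<longleftrightarrow> (\<forall>M. \<exists>n. M \<le> v n s)" for s
  have "\<forall>s\<in>S. \<forall>\<^sub>F N in sequentially. bounded s N \<or> unbounded s"
    using mono_nat_eventually_const_or_unbounded[OF mono]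
    unfolding bounded_def unbounded_def by (auto elim: eventually_mono)
  then have "\<forall>\<^sub>F N in sequentially. \<forall>s\<in>S. bounded s N \<or> unbounded s"
    by (rule eventually_ball_finite[OF \<open>finite S\<close>])
  then obtain N where N: "\<forall>s\<in>S. bounded s N \<or> unbounded s"
    unfolding eventually_sequentially by blast
  have "\<exists>m. \<forall>s. v N s + k * (v (Suc N) s - v N s) \<le> v m s" for k
  proof -
    have "\<forall>\<^sub>F n in sequentially. v N s + k * (v (Suc N) s - v N s) \<le> v n s" if s: "s \<in> S" for s
    proof (cases "bounded s N")
      case True
      then have "\<forall>n\<ge>N. v N s + k * (v (Suc N) s - v N s) \<le> v n s"
        unfolding bounded_def by (metis diff_self_eq_0 le_Suc_eq mult_0_right add_0_right order_refl)
      then show ?thesis unfolding eventually_sequentially by blast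
    next
      case False
      then obtain n where "v N s + k * (v (Suc N) s - v N s) \<le> v n s"
        using N s unfolding unbounded_def by blast
      then have "\<forall>n'\<ge>n. v N s + k * (v (Suc N) s - v N s) \<le> v n' s"
        using monoD[OF mono[OF s]] le_trans by blast
      then show ?thesis unfolding eventually_sequentially by blast
    qed
    then have "\<forall>\<^sub>F n in sequentially. \<forall>s\<in>S. v N s + k * (v (Suc N) s - v N s) \<le> v n s"
      by (intro eventually_ball_finite[OF \<open>finite S\<close>] ballI)
    then obtain n where "\<forall>s\<in>S. v N s + k * (v (Suc N) s - v N s) \<le> v n s"
      unfolding eventually_sequentially by blast
    then have "v N s + k * (v (Suc N) s - v N s) \<le> v n s" for s
      using support by (cases "s \<in> S") simp_all
    then show ?thesis by blast
  qed
  then show thesis by (rule that)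
qed

lemma vector_seq_pumpable:
  fixes v :: "nat \<Rightarrow> 'a \<Rightarrow> nat"
  assumes "finite S" and support: "\<And>n s. s \<notin> S \<Longrightarrow> v n s = 0"
  obtains a b where "a < b" "v a \<le> v b" "\<And>k. \<exists>m. \<forall>s. v a s + k * (v b s - v a s) \<le> v m s"
proof -
  obtain \<phi> :: "nat \<Rightarrow> nat" where \<phi>: "strict_mono \<phi>"
    and mono: "\<And>s. s \<in> S \<Longrightarrow> mono (\<lambda>n. v (\<phi> n) s)"
    using finite_coordinates_mono_subseq[OF \<open>finite S\<close>] by blast
  obtain N where pump: "\<And>k. \<exists>m. \<forall>s. v (\<phi> N) s + k * (v (\<phi> (Suc N)) s - v (\<phi> N) s) \<le> v (\<phi> m) s"
    using mono_vector_seq_pumpable[of S "\<lambda>n. v (\<phi> n)", OF \<open>finite S\<close> support mono] by blast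
  have "\<phi> N < \<phi> (Suc N)" using \<phi> by (simp add: strict_mono_def)
  moreover have "v (\<phi> N) \<le> v (\<phi> (Suc N))"
    unfolding le_fun_def
  proof
    fix s show "v (\<phi> N) s \<le> v (\<phi> (Suc N)) s"
      using mono[of s] support[of s] by (cases "s \<in> S") (auto simp: mono_def)
  qed
  ultimately show thesis using that pump by blast
qed

section \<open>Superadditive functions with periodic increments\<close>

lemma superadditiveD: "superadditive f \<Longrightarrow> f x + f y \<le> f (x + y)"
  unfolding superadditive_def by blast

lemma superadditive_zero: "superadditive f \<Longrightarrow> f 0 = 0"
  using superadditiveD[of f 0 0] by simp

lemma superadditive_mono: "superadditive f \<Longrightarrow> x \<le> y \<Longrightarrow> f x \<le> f y"
  using superadditiveD[of f x "y - x"] by simp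

lemma eventually_exact_increments:
  fixes g :: "nat \<Rightarrow> nat"
  assumes step: "\<And>k. g k + G \<le> g (Suc k)" and bound: "\<And>k. g k \<le> B + k * G"
  shows "\<forall>\<^sub>F k in sequentially. g (Suc k) = g k + G"
proof -
  have lower: "k * G \<le> g k" for k
  proof (induction k)
    case (Suc k)
    then show ?case using step[of k] by simp
  qed simp
  define u where "u k = g k - k * G" for k
  have g_u: "g k = u k + k * G" for k
    using lower[of k] by (simp add: u_def)
  have "mono u"
    unfolding mono_iff_le_Suc
  proof
    fix k show "u k \<le> u (Suc k)" using step[of k] g_u[of k] g_u[of "Suc k"] by simp
  qed
  moreover have "\<not> (\<forall>M. \<exists>n. M \<le> u n)"
  proof
    assume "\<forall>M. \<exists>n. M \<le> u n"
    then obtain n where "Suc B \<le> u n" by blast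
    with bound[of n] g_u[of n] show False by simp
  qed
  ultimately have "\<forall>\<^sub>F N in sequentially. \<forall>n\<ge>N. u n = u N"
    using mono_nat_eventually_const_or_unbounded by blast
  then have "\<forall>\<^sub>F k in sequentially. u (Suc k) = u k"
  proof (rule eventually_mono)
    fix N assume "\<forall>n\<ge>N. u n = u N"
    then show "u (Suc N) = u N" using le_SucI[OF order_refl] by blast
  qed
  then show ?thesis
    by (rule eventually_mono) (simp add: g_u)
qed

lemma superadditive_pumping_periodic_increments:
  fixes f :: "nat \<Rightarrow> nat"
  assumes sa: "superadditive f" and "0 < q"
    and step: "\<And>y. a \<le> y \<Longrightarrow> f y + G \<le> f (y + q)"
    and pumped: "\<And>k. f (a + k * q) \<le> f a + k * G"
  shows "\<exists>N. \<forall>x\<ge>N. f (x + q) = f x + G"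
proof -
  have upper: "f x \<le> f a + m * G" if "x \<le> a + m * q" for x m
  proof -
    have "f x + f (a + m * q - x) \<le> f (a + m * q)"
      using superadditiveD[OF sa, of x "a + m * q - x"] that by simp
    then show ?thesis using pumped[of m] by simp
  qed
  have "\<forall>\<^sub>F k in sequentially. f (a + r + Suc k * q) = f (a + r + k * q) + G" for r
  proof (rule eventually_exact_increments[of "\<lambda>k. f (a + r + k * q)" G "f a + r * G"])
    show "f (a + r + k * q) + G \<le> f (a + r + Suc k * q)" for k
      using step[of "a + r + k * q"] by (simp add: algebra_simps)
    have "a + r + k * q \<le> a + (k + r) * q" for k
      using \<open>0 < q\<close> by (simp add: algebra_simps)
    then show "f (a + r + k * q) \<le> f a + r * G + k * G" for k
      using upper[of "a + r + k * q" "k + r"] by (simp add: algebra_simps)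
  qed
  then have "\<forall>\<^sub>F k in sequentially. \<forall>r\<in>{..<q}. f (a + r + Suc k * q) = f (a + r + k * q) + G"
    by (intro eventually_ball_finite ballI) simp_all
  then obtain K where K: "\<And>k r. K \<le> k \<Longrightarrow> r < q \<Longrightarrow> f (a + r + Suc k * q) = f (a + r + k * q) + G"
    unfolding eventually_sequentially by blast
  have "f (x + q) = f x + G" if "a + K * q \<le> x" for x
  proof -
    define r k where "r = (x - a) mod q" and "k = (x - a) div q"
    have x: "x = a + r + k * q"
      using that by (simp add: r_def k_def)
    have "K \<le> k"
      using that \<open>0 < q\<close> by (simp add: k_def less_eq_div_iff_mult_less_eq)
    moreover have "r < q" using \<open>0 < q\<close> by (simp add: r_def)
    ultimately show ?thesis using K[of k r] by (simp add: x algebra_simps)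
  qed
  then show ?thesis by blast
qed

lemma
  fixes f :: "nat \<Rightarrow> nat"
  assumes second_diff: "\<And>x. N \<le> x \<Longrightarrow> f (x + 2 * P) + f x = 2 * f (x + P)" and "N \<le> x"
  shows vanishing_second_difference_periodic:
      "int (f (x + k * P + P)) - int (f (x + k * P)) = int (f (x + P)) - int (f x)"
    and vanishing_second_difference_linear:
      "int (f (x + k * P)) = int (f x) + int k * (int (f (x + P)) - int (f x))"
proof -
  have step: "int (f (y + P + P)) - int (f (y + P)) = int (f (y + P)) - int (f y)" if "N \<le> y" for y
  proof -
    have "f (y + P + P) + f y = 2 * f (y + P)"
      using second_diff[OF that] by (simp add: mult_2 add.assoc)
    then show ?thesis by linarith
  qed
  show periodic: "int (f (x + k * P + P)) - int (f (x + k * P)) = int (f (x + P)) - int (f x)" for k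
  proof (induction k)
    case (Suc k)
    then show ?case using step[of "x + k * P"] \<open>N \<le> x\<close> by (simp add: algebra_simps)
  qed simp
  show "int (f (x + k * P)) = int (f x) + int k * (int (f (x + P)) - int (f x))"
  proof (induction k)
    case (Suc k)
    then show ?case using periodic[of k] by (simp add: algebra_simps)
  qed simp
qed

text \<open>A drop of the increment would be amplified by pumping and contradict superadditivity.\<close>
lemma superadditive_increment_mono:
  fixes f :: "nat \<Rightarrow> nat" and d :: "nat \<Rightarrow> int"
  assumes sa: "superadditive f"
    and linear: "\<And>x k. N \<le> x \<Longrightarrow> int (f (x + k * P)) = int (f x) + int k * d x"
    and "N \<le> x"
  shows "d x \<le> d (x + y)"
proof (rule ccontr)
  assume "\<not> d x \<le> d (x + y)"
  define k where "k = f (x + y) + 1"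
  have "f (x + k * P) + f y \<le> f (x + y + k * P)"
    using superadditiveD[OF sa, of "x + k * P" y] by (simp add: algebra_simps)
  then have "int (f x) + int k * d x + int (f y) \<le> int (f (x + y)) + int k * d (x + y)"
    using linear[of x k] linear[of "x + y" k] \<open>N \<le> x\<close> by simp
  then have "int k * (d x - d (x + y)) \<le> int (f (x + y))"
    by (simp add: algebra_simps)
  moreover have "int k * 1 \<le> int k * (d x - d (x + y))"
    using \<open>\<not> d x \<le> d (x + y)\<close> by (intro mult_left_mono) simp_all
  ultimately have "int k \<le> int (f (x + y))" by linarith
  then show False by (simp add: k_def)
qed

lemma superadditive_constant_increments:
  fixes f :: "nat \<Rightarrow> nat"
  assumes sa: "superadditive f"
    and second_diff: "\<And>x. N \<le> x \<Longrightarrow> f (x + 2 * P) + f x = 2 * f (x + P)"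
  shows "\<forall>x\<ge>N. f (x + P) = f x + (f (N + P) - f N)"
proof -
  define d where "d x = int (f (x + P)) - int (f x)" for x
  have d_periodic: "d (x + k * P) = d x" if "N \<le> x" for x k
    using vanishing_second_difference_periodic[OF second_diff that] by (simp add: d_def)
  have linear: "int (f (x + k * P)) = int (f x) + int k * d x" if "N \<le> x" for x k
    using vanishing_second_difference_linear[OF second_diff that] by (simp add: d_def)
  have d_mono: "d x \<le> d (x + y)" if "N \<le> x" for x y
    using superadditive_increment_mono[OF sa linear that] .
  have "d x = d N" if "N \<le> x" for x
  proof (rule antisym)
    show "d N \<le> d x" using d_mono[of N "x - N"] that by simp
    show "d x \<le> d N"
    proof (cases "P = 0")
      case True
      then show ?thesis by (simp add: d_def)
    next
      case False
      then have "x \<le> x * P" by simp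
      then have "x + (N + x * P - x) = N + x * P" by arith
      then show ?thesis
        using d_mono[OF that, of "N + x * P - x"] d_periodic[of N x] by simp
    qed
  qed
  moreover have "f N \<le> f (N + P)"
    using superadditive_mono[OF sa] by simp
  ultimately show ?thesis unfolding d_def by fastforce
qed

section \<open>Semilinear sets and functions\<close>

definition periodic_from :: "nat set \<Rightarrow> nat \<Rightarrow> nat \<Rightarrow> bool" where
  "periodic_from A n0 p \<longleftrightarrow> 0 < p \<and> (\<forall>x\<ge>n0. x \<in> A \<longleftrightarrow> x + p \<in> A)"

lemma periodic_fromI:
  "0 < p \<Longrightarrow> (\<And>x. n0 \<le> x \<Longrightarrow> x \<in> A \<longleftrightarrow> x + p \<in> A) \<Longrightarrow> periodic_from A n0 p"
  unfolding periodic_from_def by blast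

lemma periodic_fromD:
  assumes "periodic_from A n0 p"
  shows "0 < p" and "n0 \<le> x \<Longrightarrow> x \<in> A \<longleftrightarrow> x + p \<in> A"
  using assms unfolding periodic_from_def by blast+

lemma periodic_from_iterate:
  assumes "periodic_from A n0 p" "n0 \<le> x"
  shows "x \<in> A \<longleftrightarrow> x + k * p \<in> A"
proof (induction k)
  case (Suc k)
  have "x + k * p \<in> A \<longleftrightarrow> x + k * p + p \<in> A"
    using periodic_fromD(2)[OF assms(1), of "x + k * p"] assms(2) by simp
  with Suc show ?case by (simp add: algebra_simps)
qed simp

lemma periodic_from_multiple:
  assumes "periodic_from A n0 p" "n0 \<le> n1" "0 < k"
  shows "periodic_from A n1 (k * p)"
proof (rule periodic_fromI)
  show "0 < k * p" using assms periodic_fromD(1) by simp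
  fix x assume "n1 \<le> x"
  then show "x \<in> A \<longleftrightarrow> x + k * p \<in> A"
    using periodic_from_iterate[OF assms(1), of x k] assms(2) by simp
qed

lemma periodic_from_common:
  assumes "periodic_from A n0 p" "periodic_from B n1 p1"
  shows "periodic_from A (max n0 n1) (p * p1)" "periodic_from B (max n0 n1) (p * p1)"
  using periodic_from_multiple[OF assms(1) _ periodic_fromD(1)[OF assms(2)], of "max n0 n1"]
    periodic_from_multiple[OF assms(2) _ periodic_fromD(1)[OF assms(1)], of "max n0 n1"]
  by (simp_all add: mult.commute)

lemma periodic_from_Compl: "periodic_from A n0 p \<Longrightarrow> periodic_from (- A) n0 p"
  unfolding periodic_from_def by blast

lemma periodic_from_Int:
  "periodic_from A n0 p \<Longrightarrow> periodic_from B n0 p \<Longrightarrow> periodic_from (A \<inter> B) n0 p"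
  unfolding periodic_from_def by blast

lemma periodic_from_Un:
  "periodic_from A n0 p \<Longrightarrow> periodic_from B n0 p \<Longrightarrow> periodic_from (A \<union> B) n0 p"
  unfolding periodic_from_def by blast

lemma threshold_eventually_constant:
  fixes a b :: int
  assumes "nat \<bar>b\<bar> < x"
  shows "b \<le> a * int x \<longleftrightarrow> 0 < a \<or> (a = 0 \<and> b \<le> 0)"
proof (cases a "0 :: int" rule: linorder_cases)
  case less
  then have "a * int x \<le> - int x" using mult_right_mono[of a "-1" "int x"] by simp
  with assms less show ?thesis by linarith
next
  case greater
  then have "int x \<le> a * int x" using mult_right_mono[of 1 a "int x"] by simp
  with assms greater show ?thesis by linarith
qed simp

lemma semilinear_set_periodic_from:
  assumes "semilinear_set A"
  shows "\<exists>n0 p. periodic_from A n0 p"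
  using assms
proof (induction rule: semilinear_set.induct)
  case (threshold a b)
  have "b \<le> a * int x \<longleftrightarrow> b \<le> a * int (x + 1)" if "Suc (nat \<bar>b\<bar>) \<le> x" for x
    using threshold_eventually_constant[of b x a] threshold_eventually_constant[of b "x + 1" a] that
    by simp
  then have "periodic_from {x. b \<le> a * int x} (Suc (nat \<bar>b\<bar>)) 1"
    unfolding periodic_from_def by simp
  then show ?case by blast
next
  case (modset c a b)
  have "(a * int (x + c)) mod int c = (a * int x) mod int c" for x
    by (simp add: algebra_simps)
  with modset have "periodic_from {x. (a * int x) mod int c = b mod int c} 0 c"
    unfolding periodic_from_def by simp
  then show ?case by blast
next
  case (compl A)
  then show ?case using periodic_from_Compl by blast
next
  case (inter A B)
  then show ?case using periodic_from_common periodic_from_Int by metis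
next
  case (union A B)
  then show ?case using periodic_from_common periodic_from_Un by metis
qed

lemma semilinear_sets_common_period:
  assumes "finite \<D>" "\<And>D. D \<in> \<D> \<Longrightarrow> semilinear_set D"
  shows "\<exists>n0 p. 0 < p \<and> (\<forall>D\<in>\<D>. periodic_from D n0 p)"
  using assms
proof (induction rule: finite_induct)
  case empty
  show ?case by (rule exI[of _ 0], rule exI[of _ 1]) simp
next
  case (insert D \<D>)
  then obtain n0 p where p: "0 < p" "\<forall>E\<in>\<D>. periodic_from E n0 p" by blast
  obtain n1 p1 where p1: "periodic_from D n1 p1"
    using semilinear_set_periodic_from insert.prems by blast
  have "0 < p1" by (rule periodic_fromD(1)[OF p1])
  have "periodic_from D (max n0 n1) (p * p1)"
    using periodic_from_multiple[OF p1 _ p(1)] by simp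
  moreover have "periodic_from E (max n0 n1) (p * p1)" if "E \<in> \<D>" for E
    using periodic_from_multiple[OF p(2)[rule_format, OF that] _ \<open>0 < p1\<close>, of "max n0 n1"]
    by (simp add: mult.commute)
  moreover have "0 < p * p1" using p(1) \<open>0 < p1\<close> by simp
  ultimately show ?case by blast
qed

lemma semilinear_fun_second_difference:
  fixes f :: "nat \<Rightarrow> nat"
  assumes "semilinear_fun f"
  obtains N P where "0 < P" "\<And>x. N \<le> x \<Longrightarrow> f (x + 2 * P) + f x = 2 * f (x + P)"
proof -
  obtain ps :: "(nat set \<times> rat \<times> rat) list" where
    pieces: "\<forall>(D, a, b) \<in> set ps. semilinear_set D \<and> (\<forall>x \<in> D. of_nat (f x) = a * of_nat x + b)"
    and cover: "(\<Union>(D, a, b) \<in> set ps. D) = UNIV"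
    using assms unfolding semilinear_fun_def by blast
  have "D \<in> fst ` set ps \<Longrightarrow> semilinear_set D" for D
    using pieces by auto
  then obtain N P where "0 < P" and periodic: "\<forall>D\<in>fst ` set ps. periodic_from D N P"
    using semilinear_sets_common_period[of "fst ` set ps"] by blast
  have "f (x + 2 * P) + f x = 2 * f (x + P)" if "N \<le> x" for x
  proof -
    obtain D a b where Dab: "(D, a, b) \<in> set ps" "x \<in> D"
      using cover by blast
    have "periodic_from D N P" using periodic Dab(1) by force
    then have "x + 1 * P \<in> D" "x + 2 * P \<in> D"
      using periodic_from_iterate[OF _ that] Dab(2) by blast+
    moreover have "\<forall>y \<in> D. rat_of_nat (f y) = a * of_nat y + b"
      using pieces Dab(1) by fastforce
    ultimately have "rat_of_nat (f (x + 2 * P) + f x) = rat_of_nat (2 * f (x + P))"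
      using Dab(2) by (simp add: algebra_simps)
    then show ?thesis by (simp only: of_nat_eq_iff)
  qed
  with \<open>0 < P\<close> show thesis by (rule that)
qed

lemma semilinear_funI:
  fixes f :: "nat \<Rightarrow> nat" and idx :: "nat \<Rightarrow> nat" and slope offset :: "nat \<Rightarrow> rat"
  assumes idx: "\<And>x. idx x < n"
    and part: "\<And>i x. i < n \<Longrightarrow> x \<in> part i \<longleftrightarrow> idx x = i"
    and semilinear: "\<And>i. i < n \<Longrightarrow> semilinear_set (part i)"
    and affine: "\<And>i x. i < n \<Longrightarrow> x \<in> part i \<Longrightarrow> of_nat (f x) = slope i * of_nat x + offset i"
  shows "semilinear_fun f"
  unfolding semilinear_fun_def
proof (intro exI conjI)
  define ps where "ps = map (\<lambda>i. (part i, slope i, offset i)) [0..<n]"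
  show "\<forall>(D, a, b)\<in>set ps. semilinear_set D \<and> (\<forall>x\<in>D. of_nat (f x) = a * of_nat x + b)"
    using semilinear affine by (auto simp: ps_def)
  show "\<forall>i<length ps. \<forall>j<length ps. i \<noteq> j \<longrightarrow> fst (ps ! i) \<inter> fst (ps ! j) = {}"
    using part by (auto simp: ps_def)
  have "x \<in> (\<Union>(D, a, b)\<in>set ps. D)" for x
  proof -
    have "(part (idx x), slope (idx x), offset (idx x)) \<in> set ps"
      using idx[of x] by (simp add: ps_def)
    moreover have "x \<in> part (idx x)" using part[OF idx[of x]] by simp
    ultimately show ?thesis by blast
  qed
  then show "(\<Union>(D, a, b)\<in>set ps. D) = UNIV" by blast
qed

lemma semilinear_set_singleton: "semilinear_set {n}"
proof -
  have "semilinear_set ({x. int n \<le> 1 * int x} \<inter> {x. - int n \<le> (- 1) * int x})"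
    by (intro semilinear_set.inter semilinear_set.threshold)
  moreover have "{x. int n \<le> 1 * int x} \<inter> {x. - int n \<le> (- 1) * int x} = {n}" by auto
  ultimately show ?thesis by simp
qed

lemma semilinear_set_residue_class:
  assumes "r < q"
  shows "semilinear_set {x. N \<le> x \<and> x mod q = r}"
proof -
  have "semilinear_set ({x. int N \<le> 1 * int x} \<inter> {x. (1 * int x) mod int q = int r mod int q})"
    using assms by (intro semilinear_set.inter semilinear_set.threshold semilinear_set.modset) simp
  moreover have "(int x mod int q = int r mod int q) \<longleftrightarrow> x mod q = r" for x
    using assms by (simp flip: of_nat_mod)
  then have "{x. int N \<le> 1 * int x} \<inter> {x. (1 * int x) mod int q = int r mod int q}
      = {x. N \<le> x \<and> x mod q = r}"
    by auto
  ultimately show ?thesis by simp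
qed

lemma periodic_increments_semilinear_fun:
  fixes f :: "nat \<Rightarrow> nat"
  assumes "0 < q" and periodic: "\<And>x. N \<le> x \<Longrightarrow> f (x + q) = f x + G"
  shows "semilinear_fun f"
proof -
  have iterate: "f (x + t * q) = f x + t * G" if "N \<le> x" for x t
  proof (induction t)
    case (Suc t)
    then show ?case using periodic[of "x + t * q"] that by (simp add: algebra_simps)
  qed simp
  define residue where "residue r = {x. N \<le> x \<and> x mod q = r}" for r
  define base where "base r = (LEAST x. x \<in> residue r)" for r
  define slope :: rat where "slope = of_nat G / of_nat q"
  have affine: "of_nat (f x) = slope * of_nat x + (of_nat (f (base r)) - slope * of_nat (base r))"
    if "r < q" "x \<in> residue r" for r x
  proof -
    have "N * q + r \<in> residue r"
      using \<open>0 < q\<close> \<open>r < q\<close> by (simp add: residue_def trans_le_add1)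
    then have base: "base r \<in> residue r" unfolding base_def by (rule LeastI)
    have "base r \<le> x" using that(2) unfolding base_def by (rule Least_le)
    moreover have "x mod q = base r mod q" using that(2) base by (simp add: residue_def)
    ultimately obtain t where x: "x = base r + t * q"
      by (metis le_add_diff_inverse mod_eq_dvd_iff_nat dvd_def mult.commute)
    have "N \<le> base r" using base by (simp add: residue_def)
    then have "of_nat (f x) = of_nat (f (base r)) + slope * of_nat (t * q)"
      using \<open>0 < q\<close> by (simp add: x iterate slope_def)
    then show ?thesis by (simp add: x algebra_simps)
  qed
  define idx where "idx x = (if x < N then x else N + x mod q)" for x
  define part where "part i = (if i < N then {i} else residue (i - N))" for i
  show ?thesis
  proof (rule semilinear_funI[where n = "N + q" and idx = idx and part = part
        and slope = "\<lambda>i. if i < N then 0 else slope"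
        and offset = "\<lambda>i. if i < N then of_nat (f i)
                         else of_nat (f (base (i - N))) - slope * of_nat (base (i - N))"])
    show "idx x < N + q" for x
      using \<open>0 < q\<close> by (simp add: idx_def)
    show "x \<in> part i \<longleftrightarrow> idx x = i" if "i < N + q" for i x
      using that by (auto simp: idx_def part_def residue_def)
    show "semilinear_set (part i)" if "i < N + q" for i
      using that semilinear_set_singleton semilinear_set_residue_class[of "i - N" q N]
      by (simp add: part_def residue_def)
    show "of_nat (f x) = (if i < N then 0 else slope) * of_nat x +
        (if i < N then of_nat (f i) else of_nat (f (base (i - N))) - slope * of_nat (base (i - N)))"
      if "i < N + q" "x \<in> part i" for i x
      using that affine[of "i - N" x] by (auto simp: part_def)
  qed
qed

section \<open>Output-oblivious computation forces periodic increments\<close>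

locale oblivious_crn =
  fixes S :: "nat set" and R :: "reaction set" and X Y :: nat and f :: "nat \<Rightarrow> nat"
  assumes valid: "valid_crn S R" and input: "X \<in> S"
    and oblivious: "output_oblivious R Y" and computes: "stably_computes R X Y f"
begin

lemma output_le: "reachable R (init_config X x) C \<Longrightarrow> C Y \<le> f x"
  using computes output_oblivious_reachable_mono[OF oblivious] unfolding stably_computes_def by metis

lemma output_eq_imp_stable:
  assumes "reachable R (init_config X x) C" "C Y = f x"
  shows "stable_config R Y C"
  unfolding stable_config_def
proof (intro allI impI)
  fix D assume "reachable R C D"
  then show "D Y = C Y"
    using assms output_le[OF reachable_trans[OF assms(1)]] output_oblivious_reachable_mono[OF oblivious]
    by (metis le_antisym)
qed

lemma stable_output_eq:
  "reachable R (init_config X x) C \<Longrightarrow> stable_config R Y C \<Longrightarrow> C Y = f x"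
  using computes unfolding stably_computes_def stable_config_def by metis

lemma superadditive: "superadditive f"
  unfolding superadditive_def
proof (intro allI)
  fix x y
  obtain Cx Cy where Cx: "reachable R (init_config X x) Cx" "Cx Y = f x"
    and Cy: "reachable R (init_config X y) Cy" "Cy Y = f y"
    using computes reachable_refl unfolding stably_computes_def by metis
  have "reachable R (init_config X x + init_config X y) (Cx + init_config X y)"
    by (rule reachable_add[OF Cx(1)])
  moreover have "reachable R (Cx + init_config X y) (Cx + Cy)"
    using reachable_add[OF Cy(1), of Cx] by (simp add: add.commute)
  ultimately have "reachable R (init_config X (x + y)) (Cx + Cy)"
    unfolding init_config_add by (rule reachable_trans)
  then show "f x + f y \<le> f (x + y)"
    using output_le Cx(2) Cy(2) by fastforce
qed

text \<open>Each choice is possible because the output \<open>f (Suc n)\<close> remains reachable from every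
  configuration reachable from the input \<open>Suc n\<close>.\<close>
primrec settled :: "nat \<Rightarrow> config" where
  "settled 0 = 0"
| "settled (Suc n) = (SOME D. reachable R (settled n + init_config X 1) D \<and> D Y = f (Suc n))"

lemma settled_SucI:
  assumes "reachable R (init_config X n) (settled n)"
  shows "reachable R (settled n + init_config X 1) (settled (Suc n)) \<and> settled (Suc n) Y = f (Suc n)"
proof -
  have "init_config X (Suc n) = init_config X n + init_config X 1"
    using init_config_add[of X n 1] by simp
  then have "reachable R (init_config X (Suc n)) (settled n + init_config X 1)"
    using reachable_add[OF assms] by simp
  then have "\<exists>D. reachable R (settled n + init_config X 1) D \<and> D Y = f (Suc n)"
    using computes unfolding stably_computes_def by blast
  then show ?thesis unfolding settled.simps by (rule someI_ex)
qed

lemma settled: "reachable R (init_config X n) (settled n) \<and> settled n Y = f n"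
proof (induction n)
  case 0
  show ?case using superadditive_zero[OF superadditive] by (simp add: init_config_0)
next
  case (Suc n)
  have "init_config X (Suc n) = init_config X n + init_config X 1"
    using init_config_add[of X n 1] by simp
  then have "reachable R (init_config X (Suc n)) (settled n + init_config X 1)"
    using reachable_add[OF Suc[THEN conjunct1]] by simp
  with settled_SucI[OF Suc[THEN conjunct1]] show ?case
    using reachable_trans by blast
qed

lemma settled_add_input: "reachable R (settled x + init_config X r) (settled (x + r))"
proof (induction r)
  case 0
  show ?case by (simp add: init_config_0)
next
  case (Suc r)
  have eq: "settled x + init_config X (Suc r) = (settled x + init_config X r) + init_config X 1"
    using init_config_add[of X r 1] by (simp add: add.assoc)
  have "reachable R ((settled x + init_config X r) + init_config X 1)
      (settled (x + r) + init_config X 1)"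
    by (rule reachable_add[OF Suc.IH])
  then have "reachable R (settled x + init_config X (Suc r)) (settled (x + r) + init_config X 1)"
    unfolding eq .
  moreover have "reachable R (settled (x + r) + init_config X 1) (settled (Suc (x + r)))"
    using settled_SucI settled by blast
  ultimately have "reachable R (settled x + init_config X (Suc r)) (settled (Suc (x + r)))"
    by (rule reachable_trans)
  then show ?case unfolding add_Suc_right .
qed

lemma settled_stable: "stable_config R Y (settled n)"
  using output_eq_imp_stable settled by blast

lemma settled_support: "s \<notin> S \<Longrightarrow> settled n s = 0"
  using reachable_support[OF valid settled[THEN conjunct1]] input by (auto simp: init_config_def)

lemma settled_pumpable:
  obtains a q e where "settled (a + q) = settled a + e" "0 < q"
    "\<And>k. \<exists>m. \<forall>s. settled a s + k * e s \<le> settled m s"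
proof -
  have "finite S" using valid by (simp add: valid_crn_def)
  then obtain a b where "a < b" "settled a \<le> settled b"
    and pump: "\<And>k. \<exists>m. \<forall>s. settled a s + k * (settled b s - settled a s) \<le> settled m s"
    using vector_seq_pumpable[of S settled] settled_support by blast
  moreover have "settled b = settled a + (settled b - settled a)"
    using \<open>settled a \<le> settled b\<close> by (simp add: le_fun_def fun_eq_iff)
  ultimately show thesis
    using that[of a "b - a" "settled b - settled a"] by simp
qed

lemma settled_cycle_lower_bound:
  assumes cycle: "settled (a + q) = settled a + e" and "a \<le> y"
  shows "f y + e Y \<le> f (y + q)"
proof -
  have "init_config X (y + q) = (init_config X a + init_config X q) + init_config X (y - a)"
    using \<open>a \<le> y\<close> by (simp add: add.commute flip: init_config_add)
  moreover have "reachable R (settled a + init_config X q) (settled a + e)"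
    using settled_add_input[of a q] cycle by simp
  then have "reachable R ((init_config X a + init_config X q) + init_config X (y - a))
      ((settled a + e) + init_config X (y - a))"
    using settled by (blast intro: reachable_add reachable_trans)
  moreover have "(settled a + e) + init_config X (y - a) = (settled a + init_config X (y - a)) + e"
    by (simp add: ac_simps)
  moreover have "reachable R ((settled a + init_config X (y - a)) + e) (settled y + e)"
    using reachable_add[OF settled_add_input[of a "y - a"]] \<open>a \<le> y\<close> by simp
  ultimately have "reachable R (init_config X (y + q)) (settled y + e)"
    using reachable_trans by metis
  then show ?thesis using output_le settled by fastforce
qed

lemma settled_cycle_pumped:
  assumes cycle: "settled (a + q) = settled a + e"
    and below: "\<forall>s. settled a s + k * e s \<le> settled m s"
  shows "f (a + k * q) = f a + k * e Y"
proof -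
  define C where "C = settled a + (\<lambda>s. k * e s)"
  have "reachable R (settled a + init_config X q) (settled a + e)"
    using settled_add_input[of a q] cycle by simp
  then have "reachable R (settled a + init_config X (k * q)) C"
    unfolding C_def init_config_mult by (rule reachable_pump)
  then have reach: "reachable R (init_config X (a + k * q)) C"
    using reachable_add[OF settled[THEN conjunct1]] reachable_trans unfolding init_config_add by blast
  have "stable_config R Y C"
    using stable_config_antimono[OF oblivious settled_stable[of m]] below by (simp add: C_def)
  then show ?thesis
    using stable_output_eq[OF reach] settled by (simp add: C_def)
qed

lemma eventually_periodic_increments:
  obtains N q G where "0 < q" "\<And>x. N \<le> x \<Longrightarrow> f (x + q) = f x + G"
proof -
  obtain a q e where cycle: "settled (a + q) = settled a + e" and "0 < q"
    and pump: "\<And>k. \<exists>m. \<forall>s. settled a s + k * e s \<le> settled m s"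
    using settled_pumpable by blast
  have "f (a + k * q) \<le> f a + k * e Y" for k
    using pump[of k] settled_cycle_pumped[OF cycle] by fastforce
  then obtain N where "\<forall>x\<ge>N. f (x + q) = f x + e Y"
    using superadditive_pumping_periodic_increments[OF superadditive \<open>0 < q\<close>]
      settled_cycle_lower_bound[OF cycle] by blast
  with \<open>0 < q\<close> show thesis using that by blast
qed

end

section \<open>A CRN for superadditive functions with periodic increments\<close>

definition copies :: "nat \<Rightarrow> nat \<Rightarrow> config" where
  "copies s k = (\<lambda>t. if t = s then k else 0)"

definition weighted_total :: "nat \<Rightarrow> (nat \<Rightarrow> nat) \<Rightarrow> config \<Rightarrow> nat" where
  "weighted_total M w C = (\<Sum>s\<le>M. w s * C s)"

lemma weighted_total_add: "weighted_total M w (C + E) = weighted_total M w C + weighted_total M w E"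
  unfolding weighted_total_def by (simp add: add_mult_distrib2 sum.distrib)

lemma weighted_total_copies: "s \<le> M \<Longrightarrow> weighted_total M w (copies s k) = k * w s"
  unfolding weighted_total_def copies_def by (simp add: if_distrib[of "\<lambda>t. w _ * t"] cong: if_cong)

lemma weighted_total_step:
  assumes "r \<le> C"
  shows "weighted_total M w (C - r + p) + weighted_total M w r = weighted_total M w C + weighted_total M w p"
proof -
  have "w s * (C s - r s + p s) + w s * r s = w s * C s + w s * p s" for s
  proof -
    have "C s - r s + p s + r s = C s + p s" using le_funD[OF assms, of s] by simp
    then show ?thesis by (metis add_mult_distrib2)
  qed
  then show ?thesis
    unfolding weighted_total_def by (simp add: sum.distrib[symmetric])
qed

lemma weighted_total_ge: "s \<le> M \<Longrightarrow> w s * C s \<le> weighted_total M w C"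
  unfolding weighted_total_def by (rule member_le_sum) simp_all

locale superadditive_periodic =
  fixes f :: "nat \<Rightarrow> nat" and n0 P D :: nat
  assumes superadditive: "superadditive f" and n0_pos: "0 < n0" and P_pos: "0 < P"
    and periodic: "\<And>x. n0 \<le> x \<Longrightarrow> f (x + P) = f x + D"
begin

lemma periodic_iterate: "n0 \<le> c \<Longrightarrow> f (c + t * P) = f c + t * D"
proof (induction t)
  case (Suc t)
  then show ?case using periodic[of "c + t * P"] by (simp add: algebra_simps)
qed simp

definition M :: nat where "M = n0 + P"

lemma M_ge_2: "2 \<le> M"
  using n0_pos P_pos by (simp add: M_def)

definition reduce :: "nat \<Rightarrow> nat" where
  "reduce z = (if z < n0 then z else n0 + (z - n0) mod P)"

lemma reduce_lt: "reduce z < M"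
  using P_pos by (simp add: reduce_def M_def)

lemma reduce_pos: "0 < z \<Longrightarrow> 0 < reduce z"
  using n0_pos by (simp add: reduce_def)

lemma reduce_decompose:
  obtains t where "z = reduce z + t * P" "t = 0 \<or> n0 \<le> reduce z"
proof (cases "z < n0")
  case True
  then show thesis using that[of 0] by (simp add: reduce_def)
next
  case False
  then have "z = reduce z + (z - n0) div P * P" "n0 \<le> reduce z"
    by (simp_all add: reduce_def)
  then show thesis using that by blast
qed

lemma f_reduce:
  assumes "z = reduce z + t * P" "t = 0 \<or> n0 \<le> reduce z"
  shows "f z = f (reduce z) + t * D"
proof -
  have "f (reduce z + t * P) = f (reduce z) + t * D"
    using assms(2) periodic_iterate by auto
  then show ?thesis using assms(1) by simp
qed

text \<open>Species 0 is the input, species 1 the output, and species \<open>c + 1\<close> for \<open>0 < c < M\<close> a block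
  standing for \<open>c\<close> input molecules; block sizes of at least \<open>n0\<close> are only kept modulo \<open>P\<close>.\<close>

definition amount :: "nat \<Rightarrow> nat" where
  "amount s = (if s = 0 then 1 else s - 1)"

definition expected :: "nat \<Rightarrow> nat" where
  "expected s = (if 2 \<le> s then f (s - 1) else 0)"

definition blocks :: "nat \<Rightarrow> nat" where
  "blocks s = (if 2 \<le> s then 1 else 0)"

lemma weights_simps [simp]:
  "amount 0 = 1" "expected 0 = 0" "blocks 0 = 0"
  "amount (Suc 0) = 0" "expected (Suc 0) = 0" "blocks (Suc 0) = 0"
  "0 < c \<Longrightarrow> amount (Suc c) = c" "0 < c \<Longrightarrow> expected (Suc c) = f c"
  "0 < c \<Longrightarrow> blocks (Suc c) = 1"
  "amount 2 = 1" "expected 2 = f 1" "blocks 2 = 1"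
  by (auto simp: amount_def expected_def blocks_def)

definition input_reaction :: reaction where
  "input_reaction = (copies 0 1, copies 2 1 + copies 1 (f 1))"

definition merge :: "nat \<Rightarrow> nat \<Rightarrow> reaction" where
  "merge c1 c2 = (copies (c1 + 1) 1 + copies (c2 + 1) 1,
     copies (reduce (c1 + c2) + 1) 1 + copies 1 (f (c1 + c2) - f c1 - f c2))"

definition reactions :: "reaction set" where
  "reactions = insert input_reaction (case_prod merge ` ({1..<M} \<times> {1..<M}))"

lemma reactionsE:
  assumes "(r, p) \<in> reactions"
  obtains "(r, p) = input_reaction"
  | c1 c2 where "0 < c1" "c1 < M" "0 < c2" "c2 < M" "(r, p) = merge c1 c2"
proof -
  have "(r, p) = input_reaction \<or> (\<exists>c1 c2. 0 < c1 \<and> c1 < M \<and> 0 < c2 \<and> c2 < M \<and> (r, p) = merge c1 c2)"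
    using assms unfolding reactions_def by (auto simp: Suc_le_eq) blast
  then show thesis using that by blast
qed

lemma valid: "valid_crn {..M} reactions"
proof -
  have "r s = 0 \<and> p s = 0" if "(r, p) \<in> reactions" "M < s" for r p s
    using that(1)
  proof (cases rule: reactionsE)
    case 1
    then show ?thesis using M_ge_2 that(2) by (auto simp: input_reaction_def copies_def)
  next
    case (2 c1 c2)
    then show ?thesis using reduce_lt[of "c1 + c2"] that(2) by (auto simp: merge_def copies_def)
  qed
  moreover have "finite reactions" by (simp add: reactions_def)
  ultimately show ?thesis unfolding valid_crn_def by auto
qed

lemma output_oblivious: "output_oblivious reactions 1"
proof -
  have "r 1 = 0" if "(r, p) \<in> reactions" for r p
    using that by (cases rule: reactionsE) (auto simp: input_reaction_def merge_def copies_def)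
  then show ?thesis unfolding output_oblivious_def by auto
qed

abbreviation total :: "(nat \<Rightarrow> nat) \<Rightarrow> config \<Rightarrow> nat" where
  "total \<equiv> weighted_total M"

lemma total_input_step:
  assumes "copies 0 1 \<le> C"
  shows "total w (C - copies 0 1 + (copies 2 1 + copies 1 (f 1))) + w 0 = total w C + w 2 + f 1 * w 1"
  using weighted_total_step[OF assms, of M w "copies 2 1 + copies 1 (f 1)"] M_ge_2
  by (simp add: weighted_total_add weighted_total_copies)

lemma total_merge_step:
  assumes "0 < c1" "c1 < M" "0 < c2" "c2 < M" and "fst (merge c1 c2) \<le> C"
  shows "total w (C - fst (merge c1 c2) + snd (merge c1 c2)) + w (c1 + 1) + w (c2 + 1)
    = total w C + w (reduce (c1 + c2) + 1) + (f (c1 + c2) - f c1 - f c2) * w 1"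
proof -
  have "reduce (c1 + c2) + 1 \<le> M" using reduce_lt[of "c1 + c2"] by simp
  then show ?thesis
    using weighted_total_step[OF assms(5), of M w "snd (merge c1 c2)"] assms(1-4)
    by (simp add: merge_def weighted_total_add weighted_total_copies)
qed

text \<open>\<open>t\<close> counts the periods discarded so far by \<^const>\<open>reduce\<close>, each of which has already
  contributed \<open>D\<close> to the output.\<close>
definition invariant :: "nat \<Rightarrow> config \<Rightarrow> bool" where
  "invariant x C \<longleftrightarrow> (\<forall>s>M. C s = 0) \<and>
     (\<exists>t. x = total amount C + t * P \<and> C 1 = total expected C + t * D \<and>
          (0 < t \<longrightarrow> n0 \<le> total amount C))"

lemma invariant_init: "invariant x (init_config 0 x)"
proof -
  have "init_config 0 x = copies 0 x" by (simp add: init_config_def copies_def)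
  then have "total w (init_config 0 x) = x * w 0" for w
    by (simp add: weighted_total_copies)
  moreover have "init_config 0 x s = 0" if "s \<noteq> 0" for s
    using that by (simp add: init_config_def)
  ultimately show ?thesis
    unfolding invariant_def by (intro conjI exI[of _ 0]) simp_all
qed

lemma invariant_input_step:
  assumes inv: "invariant x C" and le: "copies 0 1 \<le> C"
  shows "invariant x (C - copies 0 1 + (copies 2 1 + copies 1 (f 1)))"
proof -
  define C' where "C' = C - copies 0 1 + (copies 2 1 + copies 1 (f 1))"
  have amount: "total amount C' = total amount C"
    using total_input_step[OF le, of amount] by (simp add: C'_def)
  have expected: "total expected C' = total expected C + f 1"
    using total_input_step[OF le, of expected] by (simp add: C'_def)
  have output_count: "C' 1 = C 1 + f 1"
    by (simp add: C'_def copies_def)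
  have "C' s = C s" if "M < s" for s
    using that M_ge_2 by (simp add: C'_def copies_def)
  with inv amount expected output_count show ?thesis
    unfolding invariant_def C'_def[symmetric] by auto
qed

text \<open>Merging blocks of sizes \<open>c1\<close> and \<open>c2\<close> discards \<open>t0\<close> periods of the combined size; their
  contribution \<open>t0 * D\<close> to the output is released immediately.\<close>
lemma merge_accounting:
  assumes c: "0 < c1" "c1 < M" "0 < c2" "c2 < M" and le: "fst (merge c1 c2) \<le> C"
  defines "C' \<equiv> C - fst (merge c1 c2) + snd (merge c1 c2)"
  obtains t0 where "total amount C' + t0 * P = total amount C"
    and "C' 1 + total expected C = C 1 + total expected C' + t0 * D"
    and "0 < t0 \<Longrightarrow> n0 \<le> total amount C'"
proof -
  define e where "e = reduce (c1 + c2)"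
  obtain t0 where t0: "c1 + c2 = e + t0 * P" "t0 = 0 \<or> n0 \<le> e"
    unfolding e_def by (rule reduce_decompose)
  have f_merged: "f (c1 + c2) = f e + t0 * D"
    using f_reduce t0 unfolding e_def by blast
  have "0 < e" "e < M" using reduce_pos reduce_lt c by (simp_all add: e_def)
  have amount: "total amount C' + c1 + c2 = total amount C + e"
    using total_merge_step[OF c le, of amount] c \<open>0 < e\<close> by (simp add: C'_def e_def)
  have expected: "total expected C' + f c1 + f c2 = total expected C + f e"
    using total_merge_step[OF c le, of expected] c \<open>0 < e\<close> by (simp add: C'_def e_def)
  have output_count: "C' 1 = C 1 + (f (c1 + c2) - f c1 - f c2)"
    using c \<open>0 < e\<close> by (simp add: C'_def merge_def copies_def e_def)
  have "f c1 + f c2 \<le> f (c1 + c2)" by (rule superadditiveD[OF superadditive])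
  have "1 \<le> C' (e + 1)"
    by (simp add: C'_def merge_def copies_def e_def)
  then have "e * 1 \<le> e * C' (e + 1)" by (rule mult_le_mono2)
  moreover have "e * C' (e + 1) \<le> total amount C'"
    using weighted_total_ge[of "e + 1" M amount C'] \<open>0 < e\<close> \<open>e < M\<close> by simp
  ultimately have "e \<le> total amount C'" by linarith
  show thesis
  proof (rule that)
    show "total amount C' + t0 * P = total amount C"
      using amount t0(1) by simp
    show "C' 1 + total expected C = C 1 + total expected C' + t0 * D"
      using output_count expected f_merged \<open>f c1 + f c2 \<le> f (c1 + c2)\<close> by simp
    show "n0 \<le> total amount C'" if "0 < t0"
      using that t0(2) \<open>e \<le> total amount C'\<close> by simp
  qed
qed

lemma invariant_merge_step:
  assumes inv: "invariant x C" and c: "0 < c1" "c1 < M" "0 < c2" "c2 < M"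
    and le: "fst (merge c1 c2) \<le> C"
  shows "invariant x (C - fst (merge c1 c2) + snd (merge c1 c2))"
proof -
  define C' where "C' = C - fst (merge c1 c2) + snd (merge c1 c2)"
  obtain t0 where t0: "total amount C' + t0 * P = total amount C"
    "C' 1 + total expected C = C 1 + total expected C' + t0 * D"
    "0 < t0 \<Longrightarrow> n0 \<le> total amount C'"
    using merge_accounting[OF c le] unfolding C'_def by blast
  obtain t where t: "x = total amount C + t * P" "C 1 = total expected C + t * D"
    "0 < t \<longrightarrow> n0 \<le> total amount C"
    using inv unfolding invariant_def by blast
  have "C' s = 0" if "M < s" for s
    using that c reduce_lt[of "c1 + c2"] inv
    by (simp add: C'_def merge_def copies_def invariant_def)
  moreover have "x = total amount C' + (t + t0) * P"
    using t(1) t0(1) by (simp add: add_mult_distrib)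
  moreover have "C' 1 = total expected C' + (t + t0) * D"
    using t(2) t0(2) by (simp add: add_mult_distrib)
  moreover have "0 < t + t0 \<longrightarrow> n0 \<le> total amount C'"
    using t(3) t0(1,3) by (cases "t0 = 0") simp_all
  ultimately show ?thesis
    unfolding invariant_def C'_def[symmetric] by blast
qed

lemma invariant_step:
  assumes "invariant x C" "crn_step reactions C C'"
  shows "invariant x C'"
proof -
  obtain r p where rp: "(r, p) \<in> reactions" "r \<le> C" and C': "C' = C - r + p"
    using assms(2) by (rule crn_stepE)
  from rp(1) show ?thesis
  proof (cases rule: reactionsE)
    case 1
    then show ?thesis
      using invariant_input_step[OF assms(1)] rp(2) by (simp add: C' input_reaction_def)
  next
    case (2 c1 c2)
    then show ?thesis
      using invariant_merge_step[OF assms(1) 2(1-4)] rp(2) by (simp add: C' prod_eq_iff)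
  qed
qed

lemma invariant_reachable: "reachable reactions (init_config 0 x) C \<Longrightarrow> invariant x C"
proof (induction rule: reachable_induct)
  case refl
  show ?case by (rule invariant_init)
next
  case (step D E)
  then show ?case using invariant_step by blast
qed

lemma merge_applicable:
  assumes "0 < C (c1 + 1)" "0 < C (c2 + 1)" "c1 = c2 \<Longrightarrow> 2 \<le> C (c1 + 1)"
  shows "fst (merge c1 c2) \<le> C"
  using assms by (auto simp: le_fun_def merge_def copies_def)

lemma terminal_shape:
  assumes "C 0 = 0" "\<forall>s>M. C s = 0"
    and no_merge: "\<And>c1 c2. 0 < c1 \<Longrightarrow> c1 < M \<Longrightarrow> 0 < c2 \<Longrightarrow> c2 < M \<Longrightarrow> \<not> fst (merge c1 c2) \<le> C"
  obtains "C = copies 1 (C 1)"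
  | c where "0 < c" "c < M" "C = copies 1 (C 1) + copies (c + 1) 1"
proof -
  have species: "s = 0 \<or> s = 1 \<or> (\<exists>c. s = c + 1 \<and> 0 < c \<and> c < M) \<or> M < s" for s
    by (cases "s \<le> M") (auto intro: exI[of _ "s - 1"])
  have at_most_one: "C (c + 1) \<le> 1" if "0 < c" "c < M" for c
    using no_merge[OF that that] merge_applicable[of C c c] by linarith
  have unique: "C (c' + 1) = 0" if "0 < c" "c < M" "0 < c'" "c' < M" "c \<noteq> c'" "0 < C (c + 1)" for c c'
    using no_merge[OF that(1-4)] merge_applicable[of C c c'] that(5,6) by auto
  show thesis
  proof (cases "\<exists>c. 0 < c \<and> c < M \<and> 0 < C (c + 1)")
    case False
    have "C s = copies 1 (C 1) s" for s
      using species[of s] assms(1,2) False by (auto simp: copies_def)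
    then show thesis using that(1) by blast
  next
    case True
    then obtain c where c: "0 < c" "c < M" "0 < C (c + 1)" by blast
    have "C s = (copies 1 (C 1) + copies (c + 1) 1) s" for s
      using species[of s] assms(1,2) c at_most_one[OF c(1,2)] unique[OF c(1,2) _ _ _ c(3)]
      by (auto simp: copies_def) (metis less_irrefl)
    then show thesis using that(2)[OF c(1,2)] by blast
  qed
qed

lemma terminal_output:
  assumes inv: "invariant x C" and "C 0 = 0"
    and no_merge: "\<And>c1 c2. 0 < c1 \<Longrightarrow> c1 < M \<Longrightarrow> 0 < c2 \<Longrightarrow> c2 < M \<Longrightarrow> \<not> fst (merge c1 c2) \<le> C"
  shows "C 1 = f x"
proof -
  obtain t where t: "x = total amount C + t * P" "C 1 = total expected C + t * D"
    "0 < t \<longrightarrow> n0 \<le> total amount C"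
    using inv unfolding invariant_def by blast
  have "1 \<le> M" using M_ge_2 by simp
  have "\<forall>s>M. C s = 0" using inv by (simp add: invariant_def)
  then show ?thesis
  proof (rule terminal_shape[OF \<open>C 0 = 0\<close> _ no_merge])
    assume C: "C = copies 1 (C 1)"
    have "total w C = C 1 * w 1" for w
      using \<open>1 \<le> M\<close> by (subst C) (simp add: weighted_total_copies)
    then have "total amount C = 0" "total expected C = 0" by simp_all
    then show ?thesis
      using t n0_pos superadditive_zero[OF superadditive] by simp
  next
    fix c assume c: "0 < c" "c < M" and C: "C = copies 1 (C 1) + copies (c + 1) 1"
    have "total w C = C 1 * w 1 + w (c + 1)" for w
      using c \<open>1 \<le> M\<close> by (subst C) (simp add: weighted_total_add weighted_total_copies)
    then have "total amount C = c" "total expected C = f c"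
      using c by simp_all
    then show ?thesis
      using t periodic_iterate[of c t] by (cases "t = 0") simp_all
  qed
qed

definition potential :: "config \<Rightarrow> nat" where
  "potential C = 2 * C 0 + total blocks C"

lemma input_progress:
  assumes "invariant x C" "0 < C 0"
  shows "\<exists>C'. crn_step reactions C C' \<and> invariant x C' \<and> potential C' < potential C"
proof (intro exI conjI)
  define C' where "C' = C - copies 0 1 + (copies 2 1 + copies 1 (f 1))"
  have le: "copies 0 1 \<le> C" using assms(2) by (simp add: le_fun_def copies_def)
  then show "crn_step reactions C C'"
    unfolding C'_def using crn_stepI[of _ _ reactions] by (simp add: reactions_def input_reaction_def)
  show "invariant x C'"
    unfolding C'_def by (rule invariant_input_step[OF assms(1) le])
  show "potential C' < potential C"
    using total_input_step[OF le, of blocks] assms(2) by (simp add: potential_def C'_def copies_def)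
qed

lemma merge_progress:
  assumes "invariant x C" and c: "0 < c1" "c1 < M" "0 < c2" "c2 < M"
    and le: "fst (merge c1 c2) \<le> C"
  shows "\<exists>C'. crn_step reactions C C' \<and> invariant x C' \<and> potential C' < potential C"
proof (intro exI conjI)
  define C' where "C' = C - fst (merge c1 c2) + snd (merge c1 c2)"
  have "merge c1 c2 \<in> reactions" using c by (auto simp: reactions_def)
  then show "crn_step reactions C C'"
    unfolding C'_def using crn_stepI[of "fst (merge c1 c2)" "snd (merge c1 c2)"] le by simp
  show "invariant x C'"
    unfolding C'_def by (rule invariant_merge_step[OF assms(1) c le])
  have "0 < reduce (c1 + c2)" using reduce_pos c by simp
  then show "potential C' < potential C"
    using total_merge_step[OF c le, of blocks] c by (simp add: potential_def C'_def merge_def copies_def)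
qed

lemma terminal_no_step:
  assumes "C 0 = 0"
    and no_merge: "\<And>c1 c2. 0 < c1 \<Longrightarrow> c1 < M \<Longrightarrow> 0 < c2 \<Longrightarrow> c2 < M \<Longrightarrow> \<not> fst (merge c1 c2) \<le> C"
  shows "\<not> crn_step reactions C C'"
proof
  assume "crn_step reactions C C'"
  then obtain r p where "(r, p) \<in> reactions" "r \<le> C" by (rule crn_stepE)
  from this(1) show False
  proof (cases rule: reactionsE)
    case 1
    then show False
      using le_funD[OF \<open>r \<le> C\<close>, of 0] assms(1) by (simp add: input_reaction_def copies_def)
  next
    case (2 c1 c2)
    then have "r = fst (merge c1 c2)" by (metis fst_conv)
    then show False using no_merge 2 \<open>r \<le> C\<close> by blast
  qed
qed

lemma progress:
  assumes "invariant x C"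
  shows "\<exists>Out. reachable reactions C Out \<and> stable_config reactions 1 Out \<and> Out 1 = f x"
  using assms
proof (induction "potential C" arbitrary: C rule: less_induct)
  case less
  show ?case
  proof (cases "0 < C 0 \<or> (\<exists>c1 c2. 0 < c1 \<and> c1 < M \<and> 0 < c2 \<and> c2 < M \<and> fst (merge c1 c2) \<le> C)")
    case True
    then obtain C' where "crn_step reactions C C'" "invariant x C'" "potential C' < potential C"
      using input_progress[OF less.prems] merge_progress[OF less.prems] by blast
    then show ?thesis
      using less.hyps by (meson reachable_step reachable_trans)
  next
    case False
    then have "stable_config reactions 1 C"
      using terminal_no_step terminal_stable by (metis neq0_conv)
    moreover have "C 1 = f x"
      using terminal_output[OF less.prems] False by blast
    ultimately show ?thesis using reachable_refl by blast
  qed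
qed

lemma stably_computes: "stably_computes reactions 0 1 f"
  unfolding stably_computes_def using invariant_reachable progress reachable_trans by blast

lemma obliviously_computable: "obliviously_computable f"
  unfolding obliviously_computable_def
  using valid output_oblivious stably_computes M_ge_2
  by (intro exI[of _ "{..M}"] exI[of _ reactions] exI[of _ 0] exI[of _ 1]) auto

end

theorem theorem39:
  fixes f :: "nat \<Rightarrow> nat"
  shows "obliviously_computable f \<longleftrightarrow> semilinear_fun f \<and> superadditive f"
proof
  assume "obliviously_computable f"
  then obtain S R X Y where "oblivious_crn S R X Y f"
    unfolding obliviously_computable_def oblivious_crn_def by blast
  then interpret oblivious_crn S R X Y f .
  obtain N q G where "0 < q" and increments: "\<And>x. N \<le> x \<Longrightarrow> f (x + q) = f x + G"
    using eventually_periodic_increments by metis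
  have "semilinear_fun f"
    using \<open>0 < q\<close> increments by (rule periodic_increments_semilinear_fun)
  with superadditive show "semilinear_fun f \<and> superadditive f" by blast
next
  assume "semilinear_fun f \<and> superadditive f"
  then have "semilinear_fun f" and sa: "superadditive f" by simp_all
  obtain N P where "0 < P"
    and second_diff: "\<And>x. N \<le> x \<Longrightarrow> f (x + 2 * P) + f x = 2 * f (x + P)"
    using semilinear_fun_second_difference[OF \<open>semilinear_fun f\<close>] by metis
  have increments: "\<forall>x\<ge>N. f (x + P) = f x + (f (N + P) - f N)"
    by (rule superadditive_constant_increments[OF sa second_diff])
  have "superadditive_periodic f (Suc N) P (f (N + P) - f N)"
  proof (unfold_locales)
    show "superadditive f" by (rule sa)
    show "0 < Suc N" by simp
    show "0 < P" by (rule \<open>0 < P\<close>)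
    fix x assume "Suc N \<le> x"
    then have "N \<le> x" by simp
    then show "f (x + P) = f x + (f (N + P) - f N)" by (rule increments[rule_format])
  qed
  then show "obliviously_computable f"
    by (rule superadditive_periodic.obliviously_computable)
qed

end
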